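(* For non-negative integers $m$ and $n$, \[ \overline{{ m+n \brack n }}_{q,t} = \sum_{ p \in \mathcal{D}_{m,n}} t^{d(p)} q^{wt(p)}. \]
   Context: An overpartition is a partition in which the last occurrence of each distinct part size may be overlined; its weight $|\lambda|$ is the sum of its parts. $\overline{{m+n \brack n}}_{q,t}=\sum_{\lambda} t^{\#_o(\lambda)} q^{|\lambda|}$, the sum over all overpartitions $\lambda$ with largest part at most $m$ and at most $n$ parts, $\#_o(\lambda)$ being the number of overlined parts. $\mathcal{D}_{m,n}$ is the set of lattice paths from $(0,0)$ to $(m,n)$ using steps from $(i,j)$ to $(i+1,j)$ (East), $(i,j+1)$ (North) or $(i+1,j+1)$ (North-East). The weight of a step from $(i,j)$ is $0$ for an East step, $i$ for a North step, and $i+1$ for a North-East step; $wt(p)$ is the sum of the weights of the steps of $p$, and $d(p)$ is the number of North-East steps of $p$. *)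

theory Defs
  imports Main
begin

text \<open>An overpartition is represented as the list of its parts in non-increasing
order; each part is a pair (size, overlined?). Parts are positive, and only the
last occurrence of a part size (i.e. a part followed by a strictly smaller part,
or by nothing) may be overlined.\<close>

definition overpartition :: "(nat \<times> bool) list \<Rightarrow> bool" where
  "overpartition xs \<longleftrightarrow>
     sorted_wrt (\<ge>) (map fst xs) \<and>
     (\<forall>p\<in>set xs. 0 < fst p) \<and>
     (\<forall>i<length xs. snd (xs ! i) \<longrightarrow>
         (Suc i = length xs \<or> fst (xs ! Suc i) < fst (xs ! i)))"

definition op_weight :: "(nat \<times> bool) list \<Rightarrow> nat" where
  "op_weight xs = sum_list (map fst xs)"

definition num_overlined :: "(nat \<times> bool) list \<Rightarrow> nat" where
  "num_overlined xs = length (filter snd xs)"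

definition overparts_box :: "nat \<Rightarrow> nat \<Rightarrow> (nat \<times> bool) list set" where
  "overparts_box m n = {xs. overpartition xs \<and> length xs \<le> n \<and> (\<forall>p\<in>set xs. fst p \<le> m)}"

text \<open>The overpartition analogue of the Gaussian binomial, bracket (m+n, n) with
parameters q and t.\<close>
definition over_gbinom :: "nat \<Rightarrow> nat \<Rightarrow> 'a::comm_semiring_1 \<Rightarrow> 'a \<Rightarrow> 'a" where
  "over_gbinom m n q t = (\<Sum>xs\<in>overparts_box m n. t ^ num_overlined xs * q ^ op_weight xs)"

datatype step = E | N | NE

fun wt_from :: "nat \<Rightarrow> step list \<Rightarrow> nat" where
  "wt_from i [] = 0"
| "wt_from i (E # s) = wt_from (Suc i) s"
| "wt_from i (N # s) = i + wt_from i s"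
| "wt_from i (NE # s) = Suc i + wt_from (Suc i) s"

definition wt :: "step list \<Rightarrow> nat" where
  "wt p = wt_from 0 p"

definition d :: "step list \<Rightarrow> nat" where
  "d p = count_list p NE"

definition D :: "nat \<Rightarrow> nat \<Rightarrow> step list set" where
  "D m n = {p. count_list p E + count_list p NE = m \<and> count_list p N + count_list p NE = n}"

end

theory Submission
  imports Defs
begin

text \<open>Both sides equal 1 when m = 0 or n = 0, and both satisfy the recurrence
  G(m+1, n+1) = G(m, n+1) + q^(m+1) G(m+1, n) + t q^(m+1) G(m, n).
  For overpartitions in the (m+1) \<times> (n+1) box, either all parts are at most m, or the
  first (largest) part is m+1 and not overlined, leaving an overpartition in the
  (m+1) \<times> n box, or it is m+1 and overlined, so that it is the only part of size m+1
  and the rest lies in the m \<times> n box.  For paths to (m+1, n+1), the three cases are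
  the three possible last steps: E, N (weight m+1) and NE (weight m+1, one diagonal).\<close>

lemma eq_by_Pascal_recurrence:
  fixes f g :: "nat \<Rightarrow> nat \<Rightarrow> 'a"
  assumes "\<And>n. f 0 n = g 0 n" and "\<And>m. f m 0 = g m 0"
    and "\<And>m n. f (Suc m) (Suc n) = F m n (f m (Suc n)) (f (Suc m) n) (f m n)"
    and "\<And>m n. g (Suc m) (Suc n) = F m n (g m (Suc n)) (g (Suc m) n) (g m n)"
  shows "f m n = g m n"
proof (induction m arbitrary: n)
  case (Suc m)
  show ?case
    by (induction n) (simp_all add: assms Suc)
qed (simp add: assms)

lemma overpartition_Nil [simp]: "overpartition []"
  by (simp add: overpartition_def)

lemma overpartition_Cons:
  "overpartition ((a, b) # ys) \<longleftrightarrow>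
     0 < a \<and> (\<forall>p\<in>set ys. fst p \<le> a) \<and> overpartition ys \<and> (b \<longrightarrow> ys = [] \<or> fst (hd ys) < a)"
  unfolding overpartition_def length_Cons All_less_Suc2
  by (cases ys) auto

lemma overpartition_part_le_hd:
  "overpartition ys \<Longrightarrow> p \<in> set ys \<Longrightarrow> fst p \<le> fst (hd ys)"
  by (cases ys) (auto simp: overpartition_def)

lemma overparts_box_0_left: "overparts_box 0 n = {[]}"
proof -
  have "xs = []" if "overpartition xs" "\<forall>p\<in>set xs. fst p \<le> 0" for xs
    using that by (cases xs) (auto simp: overpartition_def)
  then show ?thesis
    by (auto simp: overparts_box_def)
qed

lemma overparts_box_0_right: "overparts_box m 0 = {[]}"
  by (auto simp: overparts_box_def)

lemma finite_overparts_box: "finite (overparts_box m n)"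
proof (rule finite_subset)
  show "overparts_box m n \<subseteq> {xs. set xs \<subseteq> {0..m} \<times> UNIV \<and> length xs \<le> n}"
    by (auto simp: overparts_box_def)
  show "finite {xs. set xs \<subseteq> {0..m} \<times> (UNIV :: bool set) \<and> length xs \<le> n}"
    by (rule finite_lists_length_le) auto
qed

lemma overparts_box_Suc_Suc:
  "overparts_box (Suc m) (Suc n) =
     overparts_box m (Suc n) \<union> Cons (Suc m, False) ` overparts_box (Suc m) n
       \<union> Cons (Suc m, True) ` overparts_box m n"
  (is "?box = ?small \<union> ?plain \<union> ?over")
proof (intro equalityI subsetI)
  fix xs assume xs: "xs \<in> ?box"
  show "xs \<in> ?small \<union> ?plain \<union> ?over"
  proof (cases xs)
    case Nil
    then show ?thesis by (auto simp: overparts_box_def)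
  next
    case (Cons x ys)
    obtain a b where x: "x = (a, b)" by force
    have ys: "0 < a" "\<forall>p\<in>set ys. fst p \<le> a" "overpartition ys" "b \<longrightarrow> ys = [] \<or> fst (hd ys) < a"
      and len: "length ys \<le> n" and a: "a \<le> Suc m"
      using xs by (auto simp: Cons x overparts_box_def overpartition_Cons)
    consider "a \<le> m" | "a = Suc m" "\<not> b" | "a = Suc m" b
      using a by linarith
    then show ?thesis
    proof cases
      case 1
      then have "xs \<in> ?small"
        using xs ys(2) by (fastforce simp: Cons x overparts_box_def)
      then show ?thesis by blast
    next
      case 2
      then have "ys \<in> overparts_box (Suc m) n"
        using ys len by (auto simp: overparts_box_def)
      then show ?thesis by (simp add: Cons x 2)
    next
      case 3
      then have "\<forall>p\<in>set ys. fst p \<le> m"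
        using ys overpartition_part_le_hd by fastforce
      then have "ys \<in> overparts_box m n"
        using ys len by (auto simp: overparts_box_def)
      then show ?thesis by (simp add: Cons x 3)
    qed
  qed
next
  fix xs assume "xs \<in> ?small \<union> ?plain \<union> ?over"
  then show "xs \<in> ?box"
    using hd_in_set by (fastforce simp: overparts_box_def overpartition_Cons)
qed

lemma over_gbinom_0_left: "over_gbinom 0 n q t = 1"
  by (simp add: over_gbinom_def overparts_box_0_left num_overlined_def op_weight_def)

lemma over_gbinom_0_right: "over_gbinom m 0 q t = 1"
  by (simp add: over_gbinom_def overparts_box_0_right num_overlined_def op_weight_def)

lemma over_gbinom_Suc_Suc:
  "over_gbinom (Suc m) (Suc n) q t =
     over_gbinom m (Suc n) q t + q ^ Suc m * over_gbinom (Suc m) n q t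
       + t * q ^ Suc m * over_gbinom m n q t"
proof -
  let ?g = "\<lambda>xs. t ^ num_overlined xs * q ^ op_weight xs"
  have "sum ?g (Cons (Suc m, b) ` overparts_box k n) = t ^ of_bool b * q ^ Suc m * over_gbinom k n q t"
    for b k
    by (simp add: sum.reindex over_gbinom_def sum_distrib_left num_overlined_def op_weight_def
        power_add mult_ac)
  moreover have "overparts_box m (Suc n) \<inter> Cons (Suc m, False) ` overparts_box (Suc m) n = {}"
    and "(overparts_box m (Suc n) \<union> Cons (Suc m, False) ` overparts_box (Suc m) n)
           \<inter> Cons (Suc m, True) ` overparts_box m n = {}"
    by (auto simp: overparts_box_def)
  ultimately show ?thesis
    unfolding over_gbinom_def overparts_box_Suc_Suc
    by (simp add: sum.union_disjoint finite_overparts_box)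
qed

lemma UNIV_step: "(UNIV :: step set) = {E, N, NE}"
  using step.exhaust by auto

lemma length_eq_count_list_steps: "length p = count_list p E + count_list p N + count_list p NE"
proof -
  have "sum (count_list p) UNIV = length p"
    by (rule sum_count_set) (simp, simp add: UNIV_step)
  then show ?thesis
    by (simp add: UNIV_step add.assoc)
qed

lemma finite_D: "finite (D m n)"
proof (rule finite_subset)
  show "D m n \<subseteq> {p. set p \<subseteq> UNIV \<and> length p \<le> m + n}"
    by (auto simp: D_def length_eq_count_list_steps)
  show "finite {p. set p \<subseteq> (UNIV :: step set) \<and> length p \<le> m + n}"
    by (rule finite_lists_length_le) (simp add: UNIV_step)
qed

lemma D_0_left: "D 0 n = {replicate n N}"
proof (intro equalityI subsetI)
  fix p assume p: "p \<in> D 0 n"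
  then have "E \<notin> set p" "NE \<notin> set p"
    by (simp_all add: D_def count_list_0_iff)
  with p show "p \<in> {replicate n N}"
    by (auto intro!: replicate_eqI simp: D_def length_eq_count_list_steps) (metis step.exhaust)
qed (simp add: D_def count_list_eq_length_filter)

lemma D_0_right: "D m 0 = {replicate m E}"
proof (intro equalityI subsetI)
  fix p assume p: "p \<in> D m 0"
  then have "N \<notin> set p" "NE \<notin> set p"
    by (simp_all add: D_def count_list_0_iff)
  with p show "p \<in> {replicate m E}"
    by (auto intro!: replicate_eqI simp: D_def length_eq_count_list_steps) (metis step.exhaust)
qed (simp add: D_def count_list_eq_length_filter)

lemma D_Suc_Suc:
  "D (Suc m) (Suc n) =
     (\<lambda>p. p @ [E]) ` D m (Suc n) \<union> (\<lambda>p. p @ [N]) ` D (Suc m) n \<union> (\<lambda>p. p @ [NE]) ` D m n"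
proof (intro equalityI subsetI)
  fix p assume p: "p \<in> D (Suc m) (Suc n)"
  then have "p \<noteq> []"
    by (auto simp: D_def)
  then obtain r x where "p = r @ [x]"
    by (cases p rule: rev_cases) auto
  with p show "p \<in> (\<lambda>p. p @ [E]) ` D m (Suc n) \<union> (\<lambda>p. p @ [N]) ` D (Suc m) n
                  \<union> (\<lambda>p. p @ [NE]) ` D m n"
    by (cases x) (auto simp: D_def)
qed (auto simp: D_def)

lemma wt_from_append:
  "wt_from i (p @ s) = wt_from i p + wt_from (i + count_list p E + count_list p NE) s"
proof (induction p arbitrary: i)
  case (Cons x p)
  then show ?case by (cases x) auto
qed simp

lemma wt_append_step:
  assumes "p \<in> D m n"
  shows "wt (p @ [E]) = wt p" and "wt (p @ [N]) = wt p + m" and "wt (p @ [NE]) = wt p + Suc m"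
  using assms by (simp_all add: wt_def wt_from_append D_def)

lemma wt_from_replicate_N: "wt_from i (replicate k N) = k * i"
  by (induction k) simp_all

lemma wt_from_replicate_E: "wt_from i (replicate k E) = 0"
  by (induction k arbitrary: i) simp_all

definition path_gf :: "nat \<Rightarrow> nat \<Rightarrow> 'a::comm_semiring_1 \<Rightarrow> 'a \<Rightarrow> 'a" where
  "path_gf m n q t = (\<Sum>p\<in>D m n. t ^ d p * q ^ wt p)"

lemma path_gf_0_left: "path_gf 0 n q t = 1"
  by (simp add: path_gf_def D_0_left d_def wt_def count_list_eq_length_filter wt_from_replicate_N)

lemma path_gf_0_right: "path_gf m 0 q t = 1"
  by (simp add: path_gf_def D_0_right d_def wt_def count_list_eq_length_filter wt_from_replicate_E)

lemma path_gf_Suc_Suc: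
  "path_gf (Suc m) (Suc n) q t =
     path_gf m (Suc n) q t + q ^ Suc m * path_gf (Suc m) n q t + t * q ^ Suc m * path_gf m n q t"
proof -
  let ?g = "\<lambda>p. t ^ d p * q ^ wt p"
  have sum_snoc: "sum ?g ((\<lambda>p. p @ [x]) ` D k l) = sum (\<lambda>p. ?g (p @ [x])) (D k l)" for x k l
    by (simp add: sum.reindex inj_on_def)
  have "sum (\<lambda>p. ?g (p @ [E])) (D m (Suc n)) = path_gf m (Suc n) q t"
    by (simp add: path_gf_def d_def wt_append_step cong: sum.cong)
  moreover have "sum (\<lambda>p. ?g (p @ [N])) (D (Suc m) n) = q ^ Suc m * path_gf (Suc m) n q t"
    by (simp add: path_gf_def d_def wt_append_step sum_distrib_left power_add mult_ac cong: sum.cong)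
  moreover have "sum (\<lambda>p. ?g (p @ [NE])) (D m n) = t * q ^ Suc m * path_gf m n q t"
    by (simp add: path_gf_def d_def wt_append_step sum_distrib_left power_add mult_ac cong: sum.cong)
  moreover have "(\<lambda>p. p @ [E]) ` D m (Suc n) \<inter> (\<lambda>p. p @ [N]) ` D (Suc m) n = {}"
    and "((\<lambda>p. p @ [E]) ` D m (Suc n) \<union> (\<lambda>p. p @ [N]) ` D (Suc m) n) \<inter> (\<lambda>p. p @ [NE]) ` D m n = {}"
    by auto
  ultimately show ?thesis
    unfolding path_gf_def[of "Suc m" "Suc n"] D_Suc_Suc
    by (simp add: sum.union_disjoint finite_D sum_snoc)
qed

theorem proposition2p1:
  fixes m n :: nat and q t :: "'a::comm_semiring_1"
  shows "over_gbinom m n q t = (\<Sum>p\<in>D m n. t ^ d p * q ^ wt p)"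
  unfolding path_gf_def[symmetric]
  by (rule eq_by_Pascal_recurrence[where F = "\<lambda>m n a b c. a + q ^ Suc m * b + t * q ^ Suc m * c"])
    (simp_all add: over_gbinom_0_left over_gbinom_0_right over_gbinom_Suc_Suc
      path_gf_0_left path_gf_0_right path_gf_Suc_Suc)

end
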